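(* Let $q\ge 2$ and $m\ge 1$. The number of different unordered partitions of ${\bf Z}_q^{(q^m-1)/(q-1)}$ into subcubes whose star matrices are fractal matrices with parameters $q$ and $m$ is exactly $\left(\frac{q^m-1}{q-1}\right)!$.
   Context: A subcube of ${\bf Z}_q^n$ is obtained by fixing some coordinates and letting the others run through ${\bf Z}_q$; its star pattern is the vector over ${\bf Z}_q\cup\{*\}$ with the fixed values in fixed coordinates and $*$ in free ones. The star matrix of a partition of ${\bf Z}_q^n$ into subcubes is the matrix whose rows are the star patterns of the subcubes. The matrices $M_{q,m}$ are defined recursively: $M_{q,0}$ has one row and zero columns; for $m\ge1$, $M_{q,m}$ consists of $q$ horizontal blocks indexed by $a=0,\dots,q-1$, each with $q^{m-1}$ rows; the first column has entry $a$ in every row of block $a$; the remaining columns are divided into $q$ vertical stripes of width equal to the number of columns of $M_{q,m-1}$, and in block $a$ the $a$-th stripe is a copy of $M_{q,m-1}$ while all other stripes of block $a$ consist only of $*$. A fractal matrix with parameters $q,m$ is any matrix obtained from $M_{q,m}$ by permuting rows and columns. ($M_{q,m}$ has $q^m$ rows and $\frac{q^m-1}{q-1}$ columns.) *)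

theory Defs
  imports Main "HOL-Library.Multiset"
begin

text \<open>A star pattern of length n over Z_q: a list of length n with entries
  Some a (fixed coordinate, a < q) or None (the star, a free coordinate).\<close>

definition zq_space :: "nat \<Rightarrow> nat \<Rightarrow> nat list set" where
  "zq_space q n = {x. length x = n \<and> (\<forall>i<n. x ! i < q)}"

definition valid_pattern :: "nat \<Rightarrow> nat \<Rightarrow> nat option list \<Rightarrow> bool" where
  "valid_pattern q n p \<longleftrightarrow> length p = n \<and> (\<forall>i<n. \<forall>a. p ! i = Some a \<longrightarrow> a < q)"

definition subcube :: "nat \<Rightarrow> nat option list \<Rightarrow> nat list set" where
  "subcube q p = {x. length x = length p \<and> (\<forall>i<length p. x ! i < q \<and>
      (case p ! i of None \<Rightarrow> True | Some a \<Rightarrow> x ! i = a))}"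

definition subcube_partition :: "nat \<Rightarrow> nat \<Rightarrow> nat option list set \<Rightarrow> bool" where
  "subcube_partition q n P \<longleftrightarrow>
     (\<forall>p\<in>P. valid_pattern q n p) \<and>
     (\<forall>p\<in>P. \<forall>p'\<in>P. p \<noteq> p' \<longrightarrow> subcube q p \<inter> subcube q p' = {}) \<and>
     (\<Union>p\<in>P. subcube q p) = zq_space q n"

fun fractal_cols :: "nat \<Rightarrow> nat \<Rightarrow> nat" where
  "fractal_cols q 0 = 0"
| "fractal_cols q (Suc m) = 1 + q * fractal_cols q m"

fun fractal_rows :: "nat \<Rightarrow> nat \<Rightarrow> nat option list list" where
  "fractal_rows q 0 = [[]]"
| "fractal_rows q (Suc m) =
     concat (map (\<lambda>a. map (\<lambda>r. Some a #
        concat (map (\<lambda>b. if b = a then r else replicate (fractal_cols q m) None) [0..<q]))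
       (fractal_rows q m)) [0..<q])"

definition permute_cols :: "(nat \<Rightarrow> nat) \<Rightarrow> nat option list \<Rightarrow> nat option list" where
  "permute_cols \<sigma> r = map (\<lambda>j. r ! \<sigma> j) [0..<length r]"

text \<open>The star matrix of P (rows = patterns of P, row order irrelevant) is a
  fractal matrix with parameters q, m: it arises from M_{q,m} by permuting
  rows and columns (compared as multisets of rows).\<close>
definition fractal_star :: "nat \<Rightarrow> nat \<Rightarrow> nat option list set \<Rightarrow> bool" where
  "fractal_star q m P \<longleftrightarrow> finite P \<and>
     (\<exists>\<sigma>. bij_betw \<sigma> {..<fractal_cols q m} {..<fractal_cols q m} \<and>
        mset_set P = mset (map (permute_cols \<sigma>) (fractal_rows q m)))"

end

theory Submission
  imports Defs "HOL-Combinatorics.Permutations"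
begin

text \<open>
  Write n = (q^m - 1)/(q - 1). By induction on m the rows of M_{q,m} form a subcube partition of
  Z_q^n: a point lies in the row of the block given by its first coordinate whose active stripe
  contains the corresponding stripe of the point. Permuting coordinates preserves subcube
  partitions, so the partitions with fractal star matrix are exactly the images of this one under
  the n! column permutations. These images are pairwise distinct because for q \<ge> 2 the only column
  permutation mapping the rows of M_{q,m} onto themselves is the identity: it must fix the first
  column (every other column has a star in all blocks but one), hence keep every stripe in place,
  and on each stripe it restricts to such a permutation for M_{q,m-1}.
\<close>

section \<open>Column permutations of subcube partitions\<close>

lemma permute_cols_eq_permute_list: "permute_cols = permute_list"
  by (simp add: fun_eq_iff permute_cols_def permute_list_def)

lemma permute_list_inv_cancel:
  assumes "\<sigma> permutes {..<length xs}"
  shows "permute_list (inv \<sigma>) (permute_list \<sigma> xs) = xs"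
    and "permute_list \<sigma> (permute_list (inv \<sigma>) xs) = xs"
proof -
  show "permute_list (inv \<sigma>) (permute_list \<sigma> xs) = xs"
    using permute_list_compose[OF permutes_inv[OF assms], of \<sigma>]
    by (simp add: permutes_inv_o[OF assms])
  show "permute_list \<sigma> (permute_list (inv \<sigma>) xs) = xs"
    using permute_list_compose[where f = "inv \<sigma>" and g = \<sigma>, OF assms]
    by (simp add: permutes_inv_o[OF assms])
qed

lemma permute_list_replicate:
  assumes "\<sigma> permutes {..<n}"
  shows "permute_list \<sigma> (replicate n x) = replicate n x"
proof (rule nth_equalityI)
  fix i assume "i < length (permute_list \<sigma> (replicate n x))"
  then show "permute_list \<sigma> (replicate n x) ! i = replicate n x ! i"
    using assms permutes_in_image[OF assms, of i] by (simp add: permute_list_nth)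
qed simp

lemma inj_on_permute_list:
  assumes "\<sigma> permutes {..<n}"
  shows "inj_on (permute_list \<sigma>) {xs. length xs = n}"
  by (rule inj_on_inverseI[where g = "permute_list (inv \<sigma>)"])
    (use assms permute_list_inv_cancel(1) in auto)

definition entry_fits :: "nat \<Rightarrow> nat \<Rightarrow> nat option \<Rightarrow> bool" where
  "entry_fits q x c \<longleftrightarrow> x < q \<and> (case c of None \<Rightarrow> True | Some a \<Rightarrow> x = a)"

lemma subcube_eq_list_all2: "subcube q p = {x. list_all2 (entry_fits q) x p}"
  by (auto simp: subcube_def entry_fits_def list_all2_conv_all_nth)

lemma mem_subcube_iff:
  "x \<in> subcube q p \<longleftrightarrow> length x = length p \<and> (\<forall>i<length p. entry_fits q (x ! i) (p ! i))"
  by (auto simp: subcube_eq_list_all2 list_all2_conv_all_nth)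

lemma entry_fits_simps [simp]:
  "entry_fits q x None \<longleftrightarrow> x < q"
  "entry_fits q x (Some a) \<longleftrightarrow> x = a \<and> a < q"
  by (auto simp: entry_fits_def)

lemma zq_space_eq_subcube: "zq_space q n = subcube q (replicate n None)"
  by (auto simp: zq_space_def subcube_def)

lemma subcube_subset_zq_space: "subcube q p \<subseteq> zq_space q (length p)"
  by (auto simp: zq_space_def subcube_def)

lemma valid_pattern_iff:
  "valid_pattern q n p \<longleftrightarrow> length p = n \<and> (\<forall>a. Some a \<in> set p \<longrightarrow> a < q)"
  by (auto simp: valid_pattern_def in_set_conv_nth)

lemma permute_list_mem_subcube_iff:
  assumes "\<sigma> permutes {..<length p}"
  shows "permute_list \<sigma> x \<in> subcube q (permute_list \<sigma> p) \<longleftrightarrow> x \<in> subcube q p"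
proof (cases "length x = length p")
  case True
  with assms show ?thesis
    by (simp add: subcube_eq_list_all2 list_all2_permute_list_iff)
qed (auto simp: subcube_def)

lemma subcube_permute_list:
  assumes \<sigma>: "\<sigma> permutes {..<length p}"
  shows "subcube q (permute_list \<sigma> p) = permute_list \<sigma> ` subcube q p"
proof
  show "permute_list \<sigma> ` subcube q p \<subseteq> subcube q (permute_list \<sigma> p)"
    using \<sigma> by (auto simp: permute_list_mem_subcube_iff)
  show "subcube q (permute_list \<sigma> p) \<subseteq> permute_list \<sigma> ` subcube q p"
  proof
    fix x assume x: "x \<in> subcube q (permute_list \<sigma> p)"
    then have "length x = length p"
      by (simp add: subcube_def)
    then have "x = permute_list \<sigma> (permute_list (inv \<sigma>) x)"
      using \<sigma> permute_list_inv_cancel(2)[of \<sigma> x] by simp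
    with x \<sigma> show "x \<in> permute_list \<sigma> ` subcube q p"
      by (metis image_eqI permute_list_mem_subcube_iff)
  qed
qed

lemma subcube_partition_permute_list:
  assumes \<sigma>: "\<sigma> permutes {..<n}" and P: "subcube_partition q n P"
  shows "subcube_partition q n (permute_list \<sigma> ` P)"
proof -
  have len: "length p = n" if "p \<in> P" for p
    using P that by (auto simp: subcube_partition_def valid_pattern_def)
  have cube: "subcube q (permute_list \<sigma> p) = permute_list \<sigma> ` subcube q p" if "p \<in> P" for p
    using subcube_permute_list \<sigma> len that by simp
  have inj: "inj_on (permute_list \<sigma>) (zq_space q n)"
    using inj_on_permute_list[OF \<sigma>] by (rule inj_on_subset) (auto simp: zq_space_def)
  have in_zq: "subcube q p \<subseteq> zq_space q n" if "p \<in> P" for p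
    using subcube_subset_zq_space len that by metis
  have "valid_pattern q n (permute_list \<sigma> p)" if "p \<in> P" for p
    using P that \<sigma> len by (auto simp: subcube_partition_def valid_pattern_iff)
  moreover have "subcube q (permute_list \<sigma> p) \<inter> subcube q (permute_list \<sigma> p') = {}"
    if "p \<in> P" "p' \<in> P" "permute_list \<sigma> p \<noteq> permute_list \<sigma> p'" for p p'
  proof -
    have "p \<noteq> p'"
      using that(3) by blast
    then have "subcube q p \<inter> subcube q p' = {}"
      using that P by (auto simp: subcube_partition_def)
    then show ?thesis
      using that cube inj_on_image_Int[OF inj in_zq[OF that(1)] in_zq[OF that(2)]] by simp
  qed
  moreover have "(\<Union>p\<in>P. subcube q (permute_list \<sigma> p)) = zq_space q n"
  proof -
    have "(\<Union>p\<in>P. subcube q (permute_list \<sigma> p)) = permute_list \<sigma> ` (\<Union>p\<in>P. subcube q p)"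
      using cube by auto
    also have "\<dots> = permute_list \<sigma> ` subcube q (replicate n None)"
      using P by (simp add: subcube_partition_def zq_space_eq_subcube)
    also have "\<dots> = zq_space q n"
      using \<sigma> by (simp add: zq_space_eq_subcube permute_list_replicate flip: subcube_permute_list)
    finally show ?thesis .
  qed
  ultimately show ?thesis
    by (auto simp: subcube_partition_def)
qed

section \<open>The rows of the matrices M_{q,m}\<close>

lemma nth_concat_equal_length:
  assumes "\<forall>x\<in>set xs. length (f x) = n" "i < length xs" "k < n"
  shows "concat (map f xs) ! (i * n + k) = f (xs ! i) ! k"
  using assms
proof (induction xs arbitrary: i)
  case (Cons x xs)
  then show ?case
    by (cases i) (simp_all add: nth_append add.assoc)
qed simp

lemma length_concat_equal_length:
  "\<forall>x\<in>set xs. length (f x) = n \<Longrightarrow> length (concat (map f xs)) = length xs * n"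
  by (induction xs) auto

lemma stripe_position_less:
  assumes "b < q" "k < (n::nat)"
  shows "1 + b * n + k < 1 + q * n"
proof -
  have "b * n + k < Suc b * n"
    using assms(2) by simp
  also have "\<dots> \<le> q * n"
    using assms(1) by (intro mult_right_mono) auto
  finally show ?thesis by simp
qed

lemma stripe_position_cases:
  assumes "j < 1 + q * (n::nat)"
  obtains "j = 0" | b k where "b < q" "k < n" "j = 1 + b * n + k"
proof (cases "j = 0")
  case False
  with assms have "0 < n" by (cases n) auto
  then have "(j - 1) div n < q" "(j - 1) mod n < n" "j = 1 + (j - 1) div n * n + (j - 1) mod n"
    using assms False by (simp_all add: div_less_iff_less_mult)
  then show ?thesis using that(2) by blast
qed

definition block_row :: "nat \<Rightarrow> nat \<Rightarrow> nat \<Rightarrow> nat option list \<Rightarrow> nat option list" where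
  "block_row q n a r = Some a # concat (map (\<lambda>b. if b = a then r else replicate n None) [0..<q])"

definition stripe :: "nat \<Rightarrow> nat \<Rightarrow> 'a list \<Rightarrow> 'a list" where
  "stripe n b x = map (\<lambda>k. x ! (1 + b * n + k)) [0..<n]"

lemma length_block_row: "length r = n \<Longrightarrow> length (block_row q n a r) = 1 + q * n"
  using length_concat_equal_length[of "[0..<q]" "\<lambda>b. if b = a then r else replicate n None" n]
  by (simp add: block_row_def)

lemma block_row_nth_0 [simp]: "block_row q n a r ! 0 = Some a"
  by (simp add: block_row_def)

lemma block_row_nth_stripe:
  assumes "length r = n" "b < q" "k < n"
  shows "block_row q n a r ! (1 + b * n + k) = (if b = a then r ! k else None)"
  using assms nth_concat_equal_length[of "[0..<q]" "\<lambda>b. if b = a then r else replicate n None" n b k]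
  by (simp add: block_row_def)

lemma stripe_block_row:
  assumes "length r = n" "b < q"
  shows "stripe n b (block_row q n a r) = (if b = a then r else replicate n None)"
proof (rule nth_equalityI)
  fix k assume "k < length (stripe n b (block_row q n a r))"
  then show "stripe n b (block_row q n a r) ! k = (if b = a then r else replicate n None) ! k"
    using assms block_row_nth_stripe[OF assms, of k a] by (simp add: stripe_def)
qed (simp add: stripe_def assms)

lemma block_row_eq_iff:
  assumes "length r = n" "length r' = n" "a < q"
  shows "block_row q n a r = block_row q n a' r' \<longleftrightarrow> a = a' \<and> r = r'"
  using stripe_block_row[OF assms(1,3), of a] stripe_block_row[OF assms(2,3), of a']
  by (metis block_row_nth_0 option.inject)

lemma set_block_row_subset: "set (block_row q n a r) \<subseteq> insert (Some a) (insert None (set r))"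
  by (auto simp: block_row_def)

lemma fractal_rows_Suc:
  "fractal_rows q (Suc m) =
     map (\<lambda>(a, r). block_row q (fractal_cols q m) a r) (List.product [0..<q] (fractal_rows q m))"
  by (simp add: block_row_def product_concat_map map_concat comp_def)

declare fractal_rows.simps(2) [simp del]

lemma set_fractal_rows_Suc:
  "set (fractal_rows q (Suc m)) =
     {block_row q (fractal_cols q m) a r | a r. a < q \<and> r \<in> set (fractal_rows q m)}"
  by (auto simp: fractal_rows_Suc) blast

lemma length_fractal_rows: "r \<in> set (fractal_rows q m) \<Longrightarrow> length r = fractal_cols q m"
  by (induction m arbitrary: r) (auto simp: set_fractal_rows_Suc length_block_row)

lemma valid_pattern_fractal_rows:
  "r \<in> set (fractal_rows q m) \<Longrightarrow> valid_pattern q (fractal_cols q m) r"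
proof (induction m arbitrary: r)
  case (Suc m)
  then obtain a r' where
    "a < q" "r' \<in> set (fractal_rows q m)" "r = block_row q (fractal_cols q m) a r'"
    by (auto simp: set_fractal_rows_Suc)
  with Suc.IH show ?case
    using set_block_row_subset[of q "fractal_cols q m" a r']
    by (fastforce simp: valid_pattern_iff length_block_row)
qed (simp add: valid_pattern_def)

lemma distinct_fractal_rows: "distinct (fractal_rows q m)"
proof (induction m)
  case (Suc m)
  have "inj_on (\<lambda>(a, r). block_row q (fractal_cols q m) a r) ({..<q} \<times> set (fractal_rows q m))"
    by (auto intro!: inj_onI simp: block_row_eq_iff length_fractal_rows)
  with Suc show ?case
    by (simp add: fractal_rows_Suc distinct_map distinct_product atLeast0LessThan)
qed simp

lemma stripe_mem_zq_space:
  assumes "x \<in> zq_space q (1 + q * n)" "b < q"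
  shows "stripe n b x \<in> zq_space q n"
  using assms stripe_position_less[OF assms(2)] by (simp add: zq_space_def stripe_def)

lemma mem_subcube_block_row:
  assumes r: "length r = n" and a: "a < q"
  shows "x \<in> subcube q (block_row q n a r) \<longleftrightarrow>
    x \<in> zq_space q (1 + q * n) \<and> x ! 0 = a \<and> stripe n a x \<in> subcube q r"
proof
  assume x: "x \<in> subcube q (block_row q n a r)"
  then have fits: "entry_fits q (x ! j) (block_row q n a r ! j)" if "j < 1 + q * n" for j
    using that by (simp add: mem_subcube_iff length_block_row[OF r])
  have "x \<in> zq_space q (1 + q * n)"
    using x subcube_subset_zq_space[of q "block_row q n a r"] by (auto simp: length_block_row[OF r])
  moreover have "x ! 0 = a"
    using fits[of 0] by simp
  moreover have "entry_fits q (stripe n a x ! k) (r ! k)" if "k < n" for k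
    using fits[OF stripe_position_less[OF a that]] block_row_nth_stripe[OF r a that] that
    by (simp add: stripe_def)
  then have "stripe n a x \<in> subcube q r"
    by (simp add: mem_subcube_iff stripe_def r)
  ultimately show "x \<in> zq_space q (1 + q * n) \<and> x ! 0 = a \<and> stripe n a x \<in> subcube q r"
    by blast
next
  assume x: "x \<in> zq_space q (1 + q * n) \<and> x ! 0 = a \<and> stripe n a x \<in> subcube q r"
  have "entry_fits q (x ! j) (block_row q n a r ! j)" if j: "j < 1 + q * n" for j
    using j
  proof (cases rule: stripe_position_cases)
    case 1
    then show ?thesis using x a by simp
  next
    case (2 b k)
    then have "entry_fits q (stripe n a x ! k) (r ! k)" if "b = a"
      using x that by (simp add: mem_subcube_iff r)
    then show ?thesis
      using x j 2 block_row_nth_stripe[OF r 2(1,2)] by (simp add: zq_space_def stripe_def)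
  qed
  then show "x \<in> subcube q (block_row q n a r)"
    using x by (simp add: mem_subcube_iff zq_space_def length_block_row[OF r])
qed

lemma fractal_rows_cover:
  "x \<in> zq_space q (fractal_cols q m) \<Longrightarrow> \<exists>r\<in>set (fractal_rows q m). x \<in> subcube q r"
proof (induction m arbitrary: x)
  case 0
  then show ?case by (simp add: zq_space_def subcube_def)
next
  case (Suc m)
  let ?n = "fractal_cols q m"
  have x: "x \<in> zq_space q (1 + q * ?n)"
    using Suc.prems by simp
  then have a: "x ! 0 < q"
    by (simp add: zq_space_def)
  obtain r where r: "r \<in> set (fractal_rows q m)" "stripe ?n (x ! 0) x \<in> subcube q r"
    using Suc.IH[OF stripe_mem_zq_space[OF x a]] by blast
  then have "x \<in> subcube q (block_row q ?n (x ! 0) r)"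
    using x a by (simp add: mem_subcube_block_row length_fractal_rows)
  with r a show ?case
    by (auto simp: set_fractal_rows_Suc)
qed

lemma fractal_rows_unique:
  "r \<in> set (fractal_rows q m) \<Longrightarrow> r' \<in> set (fractal_rows q m) \<Longrightarrow>
    x \<in> subcube q r \<Longrightarrow> x \<in> subcube q r' \<Longrightarrow> r = r'"
proof (induction m arbitrary: x r r')
  case (Suc m)
  let ?n = "fractal_cols q m"
  obtain a s where s: "a < q" "s \<in> set (fractal_rows q m)" "r = block_row q ?n a s"
    using Suc.prems(1) by (auto simp: set_fractal_rows_Suc)
  obtain a' s' where s': "a' < q" "s' \<in> set (fractal_rows q m)" "r' = block_row q ?n a' s'"
    using Suc.prems(2) by (auto simp: set_fractal_rows_Suc)
  have "x ! 0 = a" "stripe ?n a x \<in> subcube q s"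
    using Suc.prems(3) s by (simp_all add: mem_subcube_block_row length_fractal_rows)
  moreover have "x ! 0 = a'" "stripe ?n a' x \<in> subcube q s'"
    using Suc.prems(4) s' by (simp_all add: mem_subcube_block_row length_fractal_rows)
  ultimately show ?case
    using Suc.IH[OF s(2) s'(2)] s s' by metis
qed simp

lemma subcube_partition_fractal_rows:
  "subcube_partition q (fractal_cols q m) (set (fractal_rows q m))"
  unfolding subcube_partition_def
proof (intro conjI ballI impI)
  show "valid_pattern q (fractal_cols q m) r" if "r \<in> set (fractal_rows q m)" for r
    using that by (rule valid_pattern_fractal_rows)
  show "subcube q r \<inter> subcube q r' = {}"
    if "r \<in> set (fractal_rows q m)" "r' \<in> set (fractal_rows q m)" "r \<noteq> r'" for r r'
    using that fractal_rows_unique by blast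
  show "(\<Union>r\<in>set (fractal_rows q m). subcube q r) = zq_space q (fractal_cols q m)"
    using fractal_rows_cover subcube_subset_zq_space length_fractal_rows by fastforce
qed

section \<open>Rigidity of M_{q,m} under column permutations\<close>

lemma fractal_rows_ne_Nil: "0 < q \<Longrightarrow> fractal_rows q m \<noteq> []"
proof (induction m)
  case (Suc m)
  then have "0 < length (List.product [0..<q] (fractal_rows q m))"
    by (simp add: length_product)
  then show ?case
    unfolding fractal_rows_Suc by (metis length_greater_0_conv Nil_is_map_conv)
qed simp

lemma fractal_rows_column_not_star:
  assumes "0 < q" "k < fractal_cols q m"
  shows "\<exists>r\<in>set (fractal_rows q m). r ! k \<noteq> None"
  using assms(2)
proof (induction m arbitrary: k)
  case (Suc m)
  let ?n = "fractal_cols q m"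
  from Suc.prems have "k < 1 + q * ?n" by simp
  then show ?case
  proof (cases rule: stripe_position_cases)
    case 1
    obtain r where "r \<in> set (fractal_rows q m)"
      using hd_in_set[OF fractal_rows_ne_Nil[OF assms(1)]] by blast
    with 1 assms(1) show ?thesis
      by (force simp: set_fractal_rows_Suc)
  next
    case (2 b k')
    then obtain r where r: "r \<in> set (fractal_rows q m)" "r ! k' \<noteq> None"
      using Suc.IH by blast
    then have "block_row q ?n b r ! k \<noteq> None"
      using 2 block_row_nth_stripe[OF length_fractal_rows[OF r(1)] 2(1,2)] by simp
    with r(1) 2(1) show ?thesis
      by (force simp: set_fractal_rows_Suc)
  qed
qed simp

text \<open>Mapping the rows into the row set suffices: permute_list \<pi> is injective on them, so it then
  permutes the rows.\<close>

definition fractal_automorphism :: "nat \<Rightarrow> nat \<Rightarrow> (nat \<Rightarrow> nat) \<Rightarrow> bool" where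
  "fractal_automorphism q m \<pi> \<longleftrightarrow> \<pi> permutes {..<fractal_cols q m} \<and>
     (\<forall>r\<in>set (fractal_rows q m). permute_list \<pi> r \<in> set (fractal_rows q m))"

lemma fractal_automorphism_Suc_permutes:
  "fractal_automorphism q (Suc m) \<pi> \<Longrightarrow> \<pi> permutes {..<1 + q * fractal_cols q m}"
  by (simp add: fractal_automorphism_def)

lemma fractal_automorphism_block_row_image:
  assumes "fractal_automorphism q (Suc m) \<pi>" "a < q" "r \<in> set (fractal_rows q m)"
  obtains a' r' where "a' < q" "r' \<in> set (fractal_rows q m)"
    "permute_list \<pi> (block_row q (fractal_cols q m) a r) = block_row q (fractal_cols q m) a' r'"
proof -
  have "block_row q (fractal_cols q m) a r \<in> set (fractal_rows q (Suc m))"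
    using assms(2,3) by (auto simp: set_fractal_rows_Suc)
  then have "permute_list \<pi> (block_row q (fractal_cols q m) a r) \<in> set (fractal_rows q (Suc m))"
    using assms(1) by (simp add: fractal_automorphism_def)
  with that show ?thesis
    unfolding set_fractal_rows_Suc by blast
qed

lemma permute_list_block_row_nth:
  assumes "\<pi> permutes {..<1 + q * n}" "length r = n" "j < 1 + q * n"
  shows "permute_list \<pi> (block_row q n a r) ! j = block_row q n a r ! \<pi> j"
  using assms by (simp add: permute_list_nth length_block_row)

lemma fractal_automorphism_fixes_0:
  assumes q: "2 \<le> q" and aut: "fractal_automorphism q (Suc m) \<pi>"
  shows "\<pi> 0 = 0"
proof (rule ccontr)
  let ?n = "fractal_cols q m"
  assume "\<pi> 0 \<noteq> 0"
  note perm = fractal_automorphism_Suc_permutes[OF aut]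
  have "\<pi> 0 < 1 + q * ?n"
    using permutes_in_image[OF perm] by simp
  then obtain b k where bk: "b < q" "k < ?n" "\<pi> 0 = 1 + b * ?n + k"
    using \<open>\<pi> 0 \<noteq> 0\<close> by (cases rule: stripe_position_cases) auto
  define a where "a = (if b = 0 then 1 else 0::nat)"
  have a: "a < q" "a \<noteq> b"
    using q by (auto simp: a_def)
  obtain r where r: "r \<in> set (fractal_rows q m)"
    using q hd_in_set[OF fractal_rows_ne_Nil[of q m]] by fastforce
  obtain a' r' where r': "permute_list \<pi> (block_row q ?n a r) = block_row q ?n a' r'"
    using fractal_automorphism_block_row_image[OF aut a(1) r] by blast
  have "Some a' = permute_list \<pi> (block_row q ?n a r) ! 0"
    by (simp add: r')
  also have "\<dots> = block_row q ?n a r ! (1 + b * ?n + k)"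
    using permute_list_block_row_nth[OF perm length_fractal_rows[OF r]] bk by simp
  also have "\<dots> = None"
    using block_row_nth_stripe[OF length_fractal_rows[OF r] bk(1,2)] a by simp
  finally show False by simp
qed

lemma fractal_automorphism_block_row:
  assumes q: "2 \<le> q" and aut: "fractal_automorphism q (Suc m) \<pi>"
    and a: "a < q" and r: "r \<in> set (fractal_rows q m)"
  obtains r' where "r' \<in> set (fractal_rows q m)"
    "permute_list \<pi> (block_row q (fractal_cols q m) a r) = block_row q (fractal_cols q m) a r'"
proof -
  let ?n = "fractal_cols q m"
  note perm = fractal_automorphism_Suc_permutes[OF aut]
  obtain a' r' where r': "r' \<in> set (fractal_rows q m)"
    "permute_list \<pi> (block_row q ?n a r) = block_row q ?n a' r'"
    using fractal_automorphism_block_row_image[OF aut a r] by blast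
  have "Some a' = block_row q ?n a r ! \<pi> 0"
    using permute_list_block_row_nth[OF perm length_fractal_rows[OF r], where j = 0 and a = a] r'(2)
    by simp
  then have "a' = a"
    using fractal_automorphism_fixes_0[OF q aut] by simp
  with r' that show ?thesis by blast
qed

lemma fractal_automorphism_stripe:
  assumes q: "2 \<le> q" and aut: "fractal_automorphism q (Suc m) \<pi>"
    and a: "a < q" and k: "k < fractal_cols q m"
  obtains k' where "k' < fractal_cols q m"
    "\<pi> (1 + a * fractal_cols q m + k) = 1 + a * fractal_cols q m + k'"
proof -
  let ?n = "fractal_cols q m"
  let ?j = "1 + a * ?n + k"
  note perm = fractal_automorphism_Suc_permutes[OF aut]
  have "\<pi> ?j \<noteq> \<pi> 0"
    using permutes_inj[OF perm] by (auto dest: injD)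
  with fractal_automorphism_fixes_0[OF q aut] have "\<pi> ?j \<noteq> 0"
    by simp
  have "\<pi> ?j < 1 + q * ?n"
    using permutes_in_image[OF perm] stripe_position_less[OF a k] by simp
  then obtain b k' where bk': "b < q" "k' < ?n" "\<pi> ?j = 1 + b * ?n + k'"
    using \<open>\<pi> ?j \<noteq> 0\<close> by (cases rule: stripe_position_cases) auto
  obtain r where r: "r \<in> set (fractal_rows q m)" "r ! k' \<noteq> None"
    using fractal_rows_column_not_star[OF _ bk'(2)] q by auto
  obtain r' where r': "r' \<in> set (fractal_rows q m)"
    "permute_list \<pi> (block_row q ?n b r) = block_row q ?n b r'"
    using fractal_automorphism_block_row[OF q aut bk'(1) r(1)] by blast
  have "block_row q ?n b r' ! ?j = block_row q ?n b r ! \<pi> ?j"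
    using permute_list_block_row_nth[OF perm length_fractal_rows[OF r(1)] stripe_position_less[OF a k],
        where a = b] r'(2)
    by simp
  also have "\<dots> = r ! k'"
    using block_row_nth_stripe[OF length_fractal_rows[OF r(1)] bk'(1,2)] bk'(3) by simp
  finally have "a = b"
    using r(2) block_row_nth_stripe[OF length_fractal_rows[OF r'(1)] a k] by (auto split: if_splits)
  with bk' that show ?thesis by blast
qed

definition stripe_perm :: "nat \<Rightarrow> nat \<Rightarrow> (nat \<Rightarrow> nat) \<Rightarrow> nat \<Rightarrow> nat" where
  "stripe_perm n a \<pi> k = (if k < n then \<pi> (1 + a * n + k) - (1 + a * n) else k)"

lemma fractal_automorphism_stripe_perm_eq:
  assumes "2 \<le> q" "fractal_automorphism q (Suc m) \<pi>" "a < q" "k < fractal_cols q m"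
  shows "stripe_perm (fractal_cols q m) a \<pi> k < fractal_cols q m"
    and "\<pi> (1 + a * fractal_cols q m + k) =
      1 + a * fractal_cols q m + stripe_perm (fractal_cols q m) a \<pi> k"
  by (rule fractal_automorphism_stripe[OF assms]; simp add: stripe_perm_def assms(4))+

lemma fractal_automorphism_stripe_perm:
  assumes q: "2 \<le> q" and aut: "fractal_automorphism q (Suc m) \<pi>" and a: "a < q"
  shows "fractal_automorphism q m (stripe_perm (fractal_cols q m) a \<pi>)"
proof -
  let ?n = "fractal_cols q m"
  let ?\<rho> = "stripe_perm ?n a \<pi>"
  note \<rho> = fractal_automorphism_stripe_perm_eq[OF q aut a]
  note perm = fractal_automorphism_Suc_permutes[OF aut]
  have "inj_on ?\<rho> {..<?n}"
  proof (rule inj_onI)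
    fix k k' assume "k \<in> {..<?n}" "k' \<in> {..<?n}" "?\<rho> k = ?\<rho> k'"
    then have "\<pi> (1 + a * ?n + k) = \<pi> (1 + a * ?n + k')"
      using \<rho>(2) by simp
    then show "k = k'"
      using permutes_inj[OF perm] by (simp add: inj_eq)
  qed
  then have \<rho>_perm: "?\<rho> permutes {..<?n}"
    using \<rho>(1) by (intro inj_imp_permutes) (simp_all add: stripe_perm_def)
  moreover have "permute_list ?\<rho> r \<in> set (fractal_rows q m)"
    if r: "r \<in> set (fractal_rows q m)" for r
  proof -
    obtain r' where r': "r' \<in> set (fractal_rows q m)"
      "permute_list \<pi> (block_row q ?n a r) = block_row q ?n a r'"
      using fractal_automorphism_block_row[OF q aut a r] by blast
    have "permute_list ?\<rho> r = stripe ?n a (permute_list \<pi> (block_row q ?n a r))"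
    proof (rule nth_equalityI)
      fix k assume "k < length (permute_list ?\<rho> r)"
      then have k: "k < ?n"
        using length_fractal_rows[OF r] by simp
      have "stripe ?n a (permute_list \<pi> (block_row q ?n a r)) ! k =
          block_row q ?n a r ! \<pi> (1 + a * ?n + k)"
        using permute_list_block_row_nth[OF perm length_fractal_rows[OF r] stripe_position_less[OF a k]] k
        by (simp add: stripe_def)
      also have "\<dots> = r ! ?\<rho> k"
        using \<rho>[OF k] block_row_nth_stripe[OF length_fractal_rows[OF r] a] by simp
      finally show "permute_list ?\<rho> r ! k = stripe ?n a (permute_list \<pi> (block_row q ?n a r)) ! k"
        using \<rho>_perm k by (simp add: permute_list_nth length_fractal_rows[OF r])
    qed (simp add: stripe_def length_fractal_rows[OF r])
    also have "\<dots> = r'"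
      using r' a stripe_block_row[OF length_fractal_rows[OF r'(1)] a] by simp
    finally show ?thesis
      using r'(1) by simp
  qed
  ultimately show ?thesis
    by (simp add: fractal_automorphism_def)
qed

theorem fractal_automorphism_eq_id:
  assumes q: "2 \<le> q" and aut: "fractal_automorphism q m \<pi>"
  shows "\<pi> = id"
  using aut
proof (induction m arbitrary: \<pi>)
  case 0
  then show ?case by (simp add: fractal_automorphism_def)
next
  case (Suc m)
  let ?n = "fractal_cols q m"
  note perm = fractal_automorphism_Suc_permutes[OF Suc.prems]
  have "\<pi> j = j" for j
  proof (cases "j < 1 + q * ?n")
    case True
    then show ?thesis
    proof (cases rule: stripe_position_cases)
      case 1
      then show ?thesis using fractal_automorphism_fixes_0[OF q Suc.prems] by simp
    next
      case (2 a k)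
      have "stripe_perm ?n a \<pi> = id"
        using Suc.IH fractal_automorphism_stripe_perm[OF q Suc.prems 2(1)] by blast
      then show ?thesis
        using fractal_automorphism_stripe_perm_eq(2)[OF q Suc.prems 2(1,2)] 2(3) by simp
    qed
  next
    case False
    then show ?thesis using permutes_not_in[OF perm] by simp
  qed
  then show ?case by auto
qed

section \<open>Counting the partitions\<close>

definition fractal_partition :: "nat \<Rightarrow> nat \<Rightarrow> (nat \<Rightarrow> nat) \<Rightarrow> nat option list set" where
  "fractal_partition q m \<sigma> = permute_list \<sigma> ` set (fractal_rows q m)"

lemma subcube_partition_fractal_partition:
  "\<sigma> permutes {..<fractal_cols q m} \<Longrightarrow>
    subcube_partition q (fractal_cols q m) (fractal_partition q m \<sigma>)"
  unfolding fractal_partition_def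
  by (intro subcube_partition_permute_list subcube_partition_fractal_rows)

lemma fractal_star_iff:
  "fractal_star q m P \<longleftrightarrow> (\<exists>\<sigma>. \<sigma> permutes {..<fractal_cols q m} \<and> P = fractal_partition q m \<sigma>)"
proof
  let ?n = "fractal_cols q m"
  assume "fractal_star q m P"
  then obtain \<sigma> where fin: "finite P" and \<sigma>: "bij_betw \<sigma> {..<?n} {..<?n}"
    and P: "mset_set P = mset (map (permute_cols \<sigma>) (fractal_rows q m))"
    by (auto simp: fractal_star_def)
  have "P = permute_list \<sigma> ` set (fractal_rows q m)"
    using arg_cong[OF P, of set_mset] fin by (simp add: permute_cols_eq_permute_list)
  also have "\<dots> = fractal_partition q m (restrict_id \<sigma> {..<?n})"
    unfolding fractal_partition_def
    by (intro image_cong refl) (auto simp: permute_list_def length_fractal_rows)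
  finally show "\<exists>\<sigma>. \<sigma> permutes {..<?n} \<and> P = fractal_partition q m \<sigma>"
    using permutes_restrict_id[OF \<sigma>] by blast
next
  let ?n = "fractal_cols q m"
  assume "\<exists>\<sigma>. \<sigma> permutes {..<?n} \<and> P = fractal_partition q m \<sigma>"
  then obtain \<sigma> where \<sigma>: "\<sigma> permutes {..<?n}" and P: "P = fractal_partition q m \<sigma>"
    by blast
  have "inj_on (permute_list \<sigma>) (set (fractal_rows q m))"
    using inj_on_permute_list[OF \<sigma>] by (rule inj_on_subset) (auto simp: length_fractal_rows)
  then have "distinct (map (permute_list \<sigma>) (fractal_rows q m))"
    by (simp add: distinct_map distinct_fractal_rows)
  then have "mset_set P = mset (map (permute_list \<sigma>) (fractal_rows q m))"
    unfolding P fractal_partition_def by (metis mset_set_set set_map)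
  then show "fractal_star q m P"
    using permutes_imp_bij[OF \<sigma>]
    by (auto simp: fractal_star_def fractal_partition_def P permute_cols_eq_permute_list)
qed

lemma inj_on_fractal_partition:
  assumes q: "2 \<le> q"
  shows "inj_on (fractal_partition q m) {\<sigma>. \<sigma> permutes {..<fractal_cols q m}}"
proof (rule inj_onI, simp only: mem_Collect_eq)
  let ?n = "fractal_cols q m"
  fix \<sigma> \<tau> assume \<sigma>: "\<sigma> permutes {..<?n}" and \<tau>: "\<tau> permutes {..<?n}"
    and eq: "fractal_partition q m \<sigma> = fractal_partition q m \<tau>"
  have \<tau>_inv: "inv \<tau> permutes {..<?n}"
    using \<tau> by (rule permutes_inv)
  have "permute_list (\<sigma> \<circ> inv \<tau>) r \<in> set (fractal_rows q m)"
    if r: "r \<in> set (fractal_rows q m)" for r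
  proof -
    have "permute_list \<sigma> r \<in> fractal_partition q m \<tau>"
      using r eq by (auto simp: fractal_partition_def)
    then obtain r' where r': "r' \<in> set (fractal_rows q m)" "permute_list \<sigma> r = permute_list \<tau> r'"
      by (auto simp: fractal_partition_def)
    have "permute_list (\<sigma> \<circ> inv \<tau>) r = permute_list (inv \<tau>) (permute_list \<tau> r')"
      using permute_list_compose[of "inv \<tau>" r \<sigma>] \<tau>_inv r' by (simp add: length_fractal_rows[OF r])
    also have "\<dots> = r'"
      using permute_list_inv_cancel(1)[of \<tau> r'] \<tau> by (simp add: length_fractal_rows[OF r'(1)])
    finally show ?thesis using r'(1) by simp
  qed
  then have "fractal_automorphism q m (\<sigma> \<circ> inv \<tau>)"
    using permutes_compose[OF \<tau>_inv \<sigma>] by (simp add: fractal_automorphism_def)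
  then have "\<sigma> \<circ> inv \<tau> = id"
    by (rule fractal_automorphism_eq_id[OF q])
  have "\<sigma> = (\<sigma> \<circ> inv \<tau>) \<circ> \<tau>"
    by (simp add: comp_assoc permutes_inv_o(2)[OF \<tau>])
  with \<open>\<sigma> \<circ> inv \<tau> = id\<close> show "\<sigma> = \<tau>"
    by simp
qed

lemma fractal_cols_closed_form:
  assumes "0 < d"
  shows "(Suc d ^ m - 1) div d = fractal_cols (Suc d) m"
proof -
  have "Suc d ^ m = d * fractal_cols (Suc d) m + 1"
    by (induction m) (simp_all add: algebra_simps)
  with assms show ?thesis
    by simp
qed

theorem mainTheorem8:
  fixes q m :: nat
  assumes "q \<ge> 2" and "m \<ge> 1"
  shows "card {P. subcube_partition q ((q ^ m - 1) div (q - 1)) P \<and> fractal_star q m P}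
         = fact ((q ^ m - 1) div (q - 1))"
proof -
  let ?n = "fractal_cols q m"
  have n: "(q ^ m - 1) div (q - 1) = ?n"
    using fractal_cols_closed_form[of "q - 1" m] assms(1) by (simp add: Suc_diff_1)
  have "{P. subcube_partition q ?n P \<and> fractal_star q m P} =
      fractal_partition q m ` {\<sigma>. \<sigma> permutes {..<?n}}"
    using subcube_partition_fractal_partition by (auto simp: fractal_star_iff)
  then show ?thesis
    using card_image[OF inj_on_fractal_partition[OF assms(1)]] card_permutations[of "{..<?n}" ?n] n
    by simp
qed

end
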